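(* If the root system $\Phi$ is of type $C_n$, the closures of the regions of the hyperplane arrangement $\mathcal H_\Phi$ coincide with the cones on the facets of the root polytope $\mathcal P_\Phi$.
   Context: $\Phi$ is an irreducible root system of rank $n$ in the Euclidean space $E=\operatorname{span}_{\mathbb R}\Phi$; $\mathcal P_\Phi=\operatorname{conv}(\Phi)$. $\mathcal H_\Phi$ is the central hyperplane arrangement in $E$ consisting of the linear hyperplanes $\operatorname{span}_{\mathbb R}F$ for all faces $F$ of $\mathcal P_\Phi$ of codimension 2 (i.e. of dimension $n-2$). A region of $\mathcal H_\Phi$ is a connected component of $E\setminus\bigcup_{H\in\mathcal H_\Phi}H$. The cone on a facet $F$ is $\{tx\mid t\ge0,\ x\in F\}$. *)

theory Defs
  imports "HOL-Analysis.Analysis"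
begin

definition rootsC :: "(real ^ 'n) set" where
  "rootsC =
     {v. \<exists>i. v = 2 *\<^sub>R axis i 1 \<or> v = - (2 *\<^sub>R axis i 1)}
   \<union> {v. \<exists>i j. i \<noteq> j \<and> (\<exists>s t::real. (s = 1 \<or> s = -1) \<and> (t = 1 \<or> t = -1)
            \<and> v = s *\<^sub>R axis i 1 + t *\<^sub>R axis j 1)}"

definition root_polytope :: "('a::euclidean_space) set \<Rightarrow> 'a set" where
  "root_polytope \<Phi> = convex hull \<Phi>"

definition root_arrangement :: "('a::euclidean_space) set \<Rightarrow> 'a set set" where
  "root_arrangement \<Phi> =
     {span F | F. F face_of root_polytope \<Phi> \<and> aff_dim F = int (dim (span \<Phi>)) - 2}"

definition arrangement_regions :: "('a::euclidean_space) set \<Rightarrow> 'a set set \<Rightarrow> 'a set set" where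
  "arrangement_regions E H = components (E - \<Union>H)"

definition cone_on :: "('a::real_vector) set \<Rightarrow> 'a set" where
  "cone_on F = {t *\<^sub>R x | t x. t \<ge> 0 \<and> x \<in> F}"

end

theory Submission
  imports Defs
begin

text \<open>The long roots \<open>\<plusminus>2e\<^sub>i\<close> are the vertices of the root polytope P, the short roots
  \<open>\<plusminus>e\<^sub>i \<plusminus> e\<^sub>j\<close> being midpoints of them, so P is the cross-polytope of radius 2. A functional
  \<open>c\<close> with all \<open>\<bar>c\<^sub>i\<bar> \<le> 1\<close> is at most 2 on P, with equality exactly at the points whose
  nonzero coordinates have the signs of \<open>c\<close>. For a sign vector \<open>s\<close> this exposes a facet
  whose cone is the closed orthant of \<open>s\<close>, and every facet is of this form because its
  vertices contain no antipodal pair (else it would contain 0). A face of codimension 2 cannot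
  involve all coordinates, so its span lies in a coordinate hyperplane, and the functional
  \<open>\<Sum>\<^sub>i\<^sub>\<noteq>\<^sub>k x\<^sub>i\<close> exposes a face spanning the \<open>k\<close>-th one. Hence the arrangement is the coordinate
  arrangement, whose regions are the open orthants.\<close>

lemma int_dim_eq_aff_dim:
  fixes S :: "'a::euclidean_space set"
  shows "int (dim S) = (if 0 \<in> affine hull S then aff_dim S else aff_dim S + 1)"
proof -
  have "int (dim S) = int (dim (insert 0 S))"
    by (metis dim_span span_insert_0)
  also have "\<dots> = aff_dim (insert 0 S)"
    by (rule aff_dim_zero[symmetric]) (simp add: hull_inc)
  also have "\<dots> = (if 0 \<in> affine hull S then aff_dim S else aff_dim S + 1)"
    by (rule aff_dim_insert)
  finally show ?thesis .
qed

lemma span_eq_UNIV_if_axes: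
  fixes S :: "(real^'n) set"
  assumes "\<And>i. axis i 1 \<in> span S"
  shows "span S = UNIV"
proof -
  have "Basis \<subseteq> span S"
    using assms by (auto simp: Basis_vec_def)
  then show ?thesis
    by (metis span_Basis span_minimal subspace_span top.extremum_uniqueI)
qed

lemma dim_eq_CARD_if_span_UNIV:
  fixes S :: "(real^'n) set"
  assumes "span S = UNIV"
  shows "dim S = CARD('n)"
  by (metis assms dim_span dim_UNIV DIM_cart DIM_real mult_1_right)

lemma sum_coordinates_axis: "(\<Sum>i\<in>UNIV. x$i *\<^sub>R axis i 1) = (x :: real^'n)"
  using basis_expansion[of x] by (simp add: scalar_mult_eq_scaleR)

lemma coordinate_hyperplane_eq: "{x::real^'n. x$k = 0} = {x. axis k 1 \<bullet> x = 0}"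
  by (simp add: inner_axis')

lemma subspace_coordinate_hyperplane: "subspace {x::real^'n. x$k = 0}"
  unfolding coordinate_hyperplane_eq by (rule subspace_hyperplane)

lemma dim_coordinate_hyperplane: "dim {x::real^'n. x$k = 0} = CARD('n) - 1"
  unfolding coordinate_hyperplane_eq by (subst dim_hyperplane) auto


section \<open>The root polytope as a cross-polytope\<close>

definition long_roots :: "(real^'n) set" where
  "long_roots = {a *\<^sub>R axis i 1 | a i. a \<in> {-2, 2}}"

lemma finite_long_roots: "finite (long_roots :: (real^'n) set)"
proof -
  have "long_roots = (\<lambda>(a, i). a *\<^sub>R axis i 1 :: real^'n) ` ({-2, 2} \<times> UNIV)"
    unfolding long_roots_def by auto
  moreover have "finite ((\<lambda>(a, i). a *\<^sub>R axis i 1 :: real^'n) ` ({-2, 2} \<times> UNIV))"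
    by (intro finite_imageI finite_cartesian_product) auto
  ultimately show ?thesis
    by simp
qed

lemma uminus_long_root:
  assumes "v \<in> long_roots"
  shows "- v \<in> long_roots"
proof -
  obtain a i where "v = a *\<^sub>R axis i 1" "a \<in> {-2, 2}"
    using assms unfolding long_roots_def by blast
  then have "- v = (- a) *\<^sub>R axis i 1" "- a \<in> {-2, 2}"
    by auto
  then show ?thesis
    unfolding long_roots_def by blast
qed

lemma uminus_long_root_neq:
  assumes "v \<in> long_roots"
  shows "- v \<noteq> v"
proof -
  obtain a i where "v = a *\<^sub>R axis i 1" "a \<in> {-2, 2}"
    using assms unfolding long_roots_def by blast
  then have "(- v)$i \<noteq> v$i"
    by auto
  then show ?thesis
    by metis
qed

lemma axis_in_span_long_root:
  assumes "v \<in> long_roots" and "v$k \<noteq> 0"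
  shows "axis k 1 \<in> span {v}"
proof -
  obtain a i where v: "v = a *\<^sub>R axis i 1" "a \<in> {-2, 2}"
    using assms(1) unfolding long_roots_def by blast
  then have "i = k" "a \<noteq> 0"
    using assms(2) by (auto simp: axis_def split: if_splits)
  then have "axis k 1 = (1 / a) *\<^sub>R v"
    using v by simp
  then show ?thesis
    by (simp add: span_base span_mul)
qed

lemma long_roots_subset_rootsC: "long_roots \<subseteq> rootsC"
proof
  fix v
  assume "v \<in> long_roots"
  then obtain a i where "v = a *\<^sub>R axis i 1" "a = 2 \<or> a = -2"
    unfolding long_roots_def by blast
  then show "v \<in> rootsC"
    unfolding rootsC_def by auto
qed

lemma rootsC_cases:
  fixes v :: "real^'n"
  assumes "v \<in> rootsC"
  obtains "v \<in> long_roots"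
    | i j s t where "s \<in> {-1, 1}" "t \<in> {-1, 1}" "v = s *\<^sub>R axis i 1 + t *\<^sub>R axis j 1"
proof -
  consider i where "v = 2 *\<^sub>R axis i 1 \<or> v = - (2 *\<^sub>R axis i 1)"
    | i j s t where "s = 1 \<or> s = -1" "t = 1 \<or> t = -1" "v = s *\<^sub>R axis i 1 + t *\<^sub>R axis j 1"
    using assms unfolding rootsC_def by blast
  then show thesis
  proof cases
    case 1
    then have "v = 2 *\<^sub>R axis i 1 \<or> v = (-2) *\<^sub>R axis i 1"
      by simp
    then have "v \<in> long_roots"
      unfolding long_roots_def by blast
    then show thesis
      by (rule that(1))
  next
    case 2
    then show thesis
      by (intro that(2)) auto
  qed
qed

lemma rootsC_subset_hull_long_roots: "rootsC \<subseteq> convex hull long_roots"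
proof
  fix v :: "real^'n"
  assume "v \<in> rootsC"
  then show "v \<in> convex hull long_roots"
  proof (cases rule: rootsC_cases)
    case (2 i j s t)
    have "(2 * s) *\<^sub>R axis i 1 \<in> long_roots" "(2 * t) *\<^sub>R axis j 1 \<in> long_roots"
      using 2 unfolding long_roots_def by force+
    then have "midpoint ((2 * s) *\<^sub>R axis i 1) ((2 * t) *\<^sub>R axis j 1) \<in> convex hull long_roots"
      by (intro midpoints_in_convex_hull hull_inc)
    then show ?thesis
      using 2 by (simp add: midpoint_def scaleR_add_right)
  qed (simp add: hull_inc)
qed

lemma root_polytope_eq_hull_long_roots: "convex hull rootsC = convex hull long_roots"
  by (intro subset_antisym hull_minimal rootsC_subset_hull_long_roots convex_convex_hull
      hull_mono long_roots_subset_rootsC)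

lemma face_of_root_polytope_hull_long_roots:
  assumes "F face_of convex hull (rootsC :: (real^'n) set)"
  obtains W where "W \<subseteq> long_roots" and "F = convex hull W"
  using face_of_convex_hull_subset[OF finite_imp_compact[OF finite_long_roots]] assms
  unfolding root_polytope_eq_hull_long_roots by metis

lemma span_rootsC: "span (rootsC :: (real^'n) set) = UNIV"
proof (rule span_eq_UNIV_if_axes)
  fix i :: 'n
  have "2 *\<^sub>R axis i 1 \<in> rootsC"
    unfolding rootsC_def by blast
  then have "(1/2) *\<^sub>R (2 *\<^sub>R axis i 1) \<in> span (rootsC :: (real^'n) set)"
    by (intro span_mul span_base)
  then show "axis i 1 \<in> span rootsC"
    by simp
qed

lemma zero_in_root_polytope: "0 \<in> convex hull (rootsC :: (real^'n) set)"
proof -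
  have "2 *\<^sub>R axis i 1 \<in> rootsC" "- (2 *\<^sub>R axis i 1) \<in> (rootsC :: (real^'n) set)" for i :: 'n
    unfolding rootsC_def by blast+
  then have "midpoint (2 *\<^sub>R axis i 1) (- (2 *\<^sub>R axis i 1)) \<in> convex hull (rootsC :: (real^'n) set)"
    for i :: 'n
    by (intro midpoints_in_convex_hull hull_inc)
  then show ?thesis
    by (simp add: midpoint_def)
qed

lemma aff_dim_root_polytope: "aff_dim (convex hull (rootsC :: (real^'n) set)) = int CARD('n)"
proof -
  have "0 \<in> affine hull (convex hull (rootsC :: (real^'n) set))"
    using zero_in_root_polytope by (rule hull_inc)
  moreover have "span (convex hull (rootsC :: (real^'n) set)) = UNIV"
    by (metis span_rootsC hull_subset span_mono top.extremum_uniqueI)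
  ultimately show ?thesis
    using int_dim_eq_aff_dim dim_eq_CARD_if_span_UNIV by metis
qed

lemma face_of_root_polytope_eq_if_zero_in:
  assumes "F face_of convex hull (rootsC :: (real^'n) set)" and "0 \<in> F"
  shows "F = convex hull rootsC"
proof -
  have "long_roots \<subseteq> F"
  proof
    fix v :: "real^'n"
    assume v: "v \<in> long_roots"
    then have P: "v \<in> convex hull rootsC" "- v \<in> convex hull rootsC"
      using uminus_long_root long_roots_subset_rootsC by (blast intro: hull_inc)+
    have "midpoint (- v) v \<in> open_segment (- v) v"
      using uminus_long_root_neq[OF v] by simp
    then have "0 \<in> open_segment (- v) v"
      by (simp add: midpoint_def)
    then show "v \<in> F"
      using face_ofD[OF assms(1) _ P(2) P(1) assms(2)] by blast
  qed
  then have "convex hull rootsC \<subseteq> F"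
    unfolding root_polytope_eq_hull_long_roots
    by (rule hull_minimal) (rule face_of_imp_convex[OF assms(1)])
  then show ?thesis
    using face_of_imp_subset[OF assms(1)] by blast
qed

lemma inner_le_2_on_root_polytope:
  fixes c x :: "real^'n"
  assumes "x \<in> convex hull rootsC" and "\<And>i. \<bar>c$i\<bar> \<le> 1"
  shows "c \<bullet> x \<le> 2"
proof -
  have "long_roots \<subseteq> {x. c \<bullet> x \<le> 2}"
  proof
    fix v :: "real^'n"
    assume "v \<in> long_roots"
    then obtain a i where "v = a *\<^sub>R axis i 1" "a \<in> {-2, 2}"
      unfolding long_roots_def by blast
    moreover have "c$i \<le> 1" "- c$i \<le> 1"
      using assms(2)[of i] by linarith+
    ultimately show "v \<in> {x. c \<bullet> x \<le> 2}"
      by (auto simp: inner_axis)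
  qed
  then have "convex hull rootsC \<subseteq> {x. c \<bullet> x \<le> 2}"
    unfolding root_polytope_eq_hull_long_roots by (intro hull_minimal convex_halfspace_le)
  then show ?thesis
    using assms(1) by blast
qed

text \<open>Applied to the sign vector of \<open>x\<close>, the bound gives \<open>\<Sum>\<^sub>i \<bar>x\<^sub>i\<bar> \<le> 2 = c \<bullet> x\<close>,
  while \<open>c\<^sub>i x\<^sub>i \<le> \<bar>x\<^sub>i\<bar>\<close> termwise.\<close>
lemma coordinate_sign_if_inner_eq_2:
  fixes c x :: "real^'n"
  assumes "x \<in> convex hull rootsC" and "\<And>i. \<bar>c$i\<bar> \<le> 1" and "c \<bullet> x = 2"
  shows "c$i * x$i = \<bar>x$i\<bar>"
proof -
  have le: "c$j * x$j \<le> \<bar>x$j\<bar>" for j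
  proof -
    have "c$j * x$j \<le> \<bar>c$j\<bar> * \<bar>x$j\<bar>"
      by (metis abs_ge_self abs_mult)
    also have "\<dots> \<le> \<bar>x$j\<bar>"
      using assms(2)[of j] by (simp add: mult_left_le_one_le)
    finally show ?thesis .
  qed
  have "(\<Sum>j\<in>UNIV. \<bar>x$j\<bar>) = (\<chi> j. sgn (x$j)) \<bullet> x"
    unfolding inner_vec_def by (intro sum.cong) (auto simp: sgn_real_def)
  also have "\<dots> \<le> 2"
    by (rule inner_le_2_on_root_polytope[OF assms(1)]) (simp add: abs_sgn_eq)
  also have "\<dots> = (\<Sum>j\<in>UNIV. c$j * x$j)"
    using assms(3) by (simp add: inner_vec_def)
  finally have "(\<Sum>j\<in>UNIV. \<bar>x$j\<bar> - c$j * x$j) = 0"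
    using le by (intro antisym sum_nonneg) (auto simp: sum_subtractf)
  then show ?thesis
    using le by (subst (asm) sum_nonneg_eq_0_iff) auto
qed


definition root_face :: "real^'n \<Rightarrow> (real^'n) set" where
  "root_face c = convex hull rootsC \<inter> {x. c \<bullet> x = 2}"

lemma root_face_face_of:
  fixes c :: "real^'n"
  assumes "\<And>i. \<bar>c$i\<bar> \<le> 1"
  shows "root_face c face_of convex hull rootsC"
  unfolding root_face_def using assms
  by (intro face_of_Int_supporting_hyperplane_le convex_convex_hull inner_le_2_on_root_polytope)

lemma convex_root_face: "convex (root_face c)"
  unfolding root_face_def by (simp add: convex_Int convex_hyperplane)

lemma aff_dim_root_face: "aff_dim (root_face c) = int (dim (root_face c)) - 1"
proof -
  have "affine hull root_face c \<subseteq> {x. c \<bullet> x = 2}"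
    unfolding root_face_def by (intro hull_minimal affine_hyperplane) auto
  then have "0 \<notin> affine hull root_face c"
    by auto
  then show ?thesis
    using int_dim_eq_aff_dim[of "root_face c"] by simp
qed

lemma long_root_in_root_face:
  fixes c :: "real^'n"
  assumes "\<bar>c$i\<bar> = 1"
  shows "(2 * c$i) *\<^sub>R axis i 1 \<in> root_face c"
proof -
  have ci: "c$i = 1 \<or> c$i = -1"
    using assms by linarith
  then have "2 * c$i \<in> {-2, 2}"
    by auto
  then have "(2 * c$i) *\<^sub>R axis i 1 \<in> convex hull rootsC"
    using long_roots_subset_rootsC unfolding long_roots_def by (blast intro: hull_inc)
  moreover have "c \<bullet> ((2 * c$i) *\<^sub>R axis i 1) = 2"
    using ci by (auto simp: inner_axis)
  ultimately show ?thesis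
    unfolding root_face_def by blast
qed

lemma root_face_subset_coordinate_hyperplane:
  fixes c :: "real^'n"
  assumes "\<And>i. \<bar>c$i\<bar> \<le> 1" and "c$k = 0"
  shows "root_face c \<subseteq> {x. x$k = 0}"
proof
  fix x
  assume "x \<in> root_face c"
  then have "x \<in> convex hull rootsC" "c \<bullet> x = 2"
    unfolding root_face_def by auto
  from coordinate_sign_if_inner_eq_2[OF this(1) assms(1) this(2), of k] assms(2)
  show "x \<in> {x. x$k = 0}"
    by simp
qed


section \<open>Facets and orthants\<close>

definition sign_vectors :: "(real^'n) set" where
  "sign_vectors = {s. \<forall>i. \<bar>s$i\<bar> = 1}"

definition open_orthant :: "real^'n \<Rightarrow> (real^'n) set" where
  "open_orthant s = {x. \<forall>i. 0 < s$i * x$i}"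

definition closed_orthant :: "real^'n \<Rightarrow> (real^'n) set" where
  "closed_orthant s = {x. \<forall>i. 0 \<le> s$i * x$i}"

lemma sign_vector_coordinate_abs_le_1: "s \<in> sign_vectors \<Longrightarrow> \<bar>s$i\<bar> \<le> 1"
  unfolding sign_vectors_def by simp

lemma sign_vector_mult_self:
  assumes "s \<in> sign_vectors"
  shows "s$i * s$i = 1"
proof -
  have "\<bar>s$i\<bar> = 1"
    using assms unfolding sign_vectors_def by blast
  then show ?thesis
    using abs_mult_self_eq[of "s$i"] by simp
qed

lemma long_root_in_root_face_sign_vector:
  "s \<in> sign_vectors \<Longrightarrow> (2 * s$i) *\<^sub>R axis i 1 \<in> root_face s"
  unfolding sign_vectors_def by (blast intro: long_root_in_root_face)

lemma root_face_sign_vector: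
  fixes s :: "real^'n"
  assumes s: "s \<in> sign_vectors"
  shows "root_face s = closed_orthant s \<inter> {x. s \<bullet> x = 2}"
proof (intro subset_antisym subsetI)
  fix x
  assume "x \<in> root_face s"
  then have x: "x \<in> convex hull rootsC" "s \<bullet> x = 2"
    unfolding root_face_def by auto
  have "s$i * x$i = \<bar>x$i\<bar>" for i
    using x(1) sign_vector_coordinate_abs_le_1[OF s] x(2) by (rule coordinate_sign_if_inner_eq_2)
  then show "x \<in> closed_orthant s \<inter> {x. s \<bullet> x = 2}"
    using x(2) unfolding closed_orthant_def by simp
next
  fix x
  assume x: "x \<in> closed_orthant s \<inter> {x. s \<bullet> x = 2}"
  text \<open>The weights \<open>s\<^sub>i x\<^sub>i / 2\<close> write \<open>x\<close> as a convex combination of the long roots \<open>2 s\<^sub>i e\<^sub>i\<close>.\<close>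
  have "(\<Sum>i\<in>UNIV. (s$i * x$i / 2) *\<^sub>R ((2 * s$i) *\<^sub>R axis i 1)) \<in> root_face s"
  proof (rule convex_sum[OF finite_class.finite_UNIV convex_root_face])
    show "(\<Sum>i\<in>UNIV. s$i * x$i / 2) = 1"
      using x by (simp add: inner_vec_def sum_divide_distrib[symmetric])
    show "0 \<le> s$i * x$i / 2" for i
      using x unfolding closed_orthant_def by simp
    show "(2 * s$i) *\<^sub>R axis i 1 \<in> root_face s" for i
      using s by (rule long_root_in_root_face_sign_vector)
  qed
  moreover have "(\<Sum>i\<in>UNIV. (s$i * x$i / 2) *\<^sub>R ((2 * s$i) *\<^sub>R axis i 1)) = x"
  proof -
    have "(s$i * x$i / 2) *\<^sub>R ((2 * s$i) *\<^sub>R axis i 1) = x$i *\<^sub>R axis i 1" for i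
    proof -
      have "(s$i * x$i / 2) * (2 * s$i) = x$i * (s$i * s$i)"
        by (simp add: field_simps)
      then show ?thesis
        by (simp add: sign_vector_mult_self[OF s])
    qed
    then have "(\<Sum>i\<in>UNIV. (s$i * x$i / 2) *\<^sub>R ((2 * s$i) *\<^sub>R axis i 1))
        = (\<Sum>i\<in>UNIV. x$i *\<^sub>R axis i 1)"
      by (intro sum.cong refl)
    also have "\<dots> = x"
      by (rule sum_coordinates_axis)
    finally show ?thesis .
  qed
  ultimately show "x \<in> root_face s"
    by simp
qed

lemma cone_on_root_face:
  fixes s :: "real^'n"
  assumes s: "s \<in> sign_vectors"
  shows "cone_on (root_face s) = closed_orthant s"
proof (intro subset_antisym subsetI)
  fix z
  assume "z \<in> cone_on (root_face s)"
  then obtain t y where "z = t *\<^sub>R y" "0 \<le> t" "y \<in> closed_orthant s"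
    unfolding cone_on_def root_face_sign_vector[OF s] by blast
  then show "z \<in> closed_orthant s"
    unfolding closed_orthant_def by (simp add: mult.left_commute)
next
  fix y
  assume "y \<in> closed_orthant s"
  then have nonneg: "0 \<le> s$i * y$i" for i
    unfolding closed_orthant_def by blast
  show "y \<in> cone_on (root_face s)"
  proof (cases "s \<bullet> y = 0")
    case True
    then have "s$i * y$i = 0" for i
      using nonneg by (simp add: inner_vec_def sum_nonneg_eq_0_iff)
    then have "y$i = 0" for i
      using sign_vector_mult_self[OF s, of i] by (metis mult.assoc mult_1_left mult_zero_right)
    then have "y = 0 *\<^sub>R ((2 * s$i) *\<^sub>R axis i 1)" for i
      by (simp add: vec_eq_iff)
    then show ?thesis
      unfolding cone_on_def using long_root_in_root_face_sign_vector[OF s] by blast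
  next
    case False
    moreover have "0 \<le> s \<bullet> y"
      unfolding inner_vec_def using nonneg by (simp add: sum_nonneg)
    ultimately have pos: "0 < s \<bullet> y"
      by linarith
    have "0 \<le> s$i * ((2 / (s \<bullet> y)) * y$i)" for i
      using nonneg[of i] pos by (simp add: mult.left_commute)
    then have "(2 / (s \<bullet> y)) *\<^sub>R y \<in> root_face s"
      unfolding root_face_sign_vector[OF s] closed_orthant_def using pos by simp
    moreover have "y = (s \<bullet> y / 2) *\<^sub>R ((2 / (s \<bullet> y)) *\<^sub>R y)" "0 \<le> s \<bullet> y / 2"
      using pos by simp_all
    ultimately show ?thesis
      unfolding cone_on_def by blast
  qed
qed

lemma span_root_face_sign_vector:
  assumes "s \<in> sign_vectors"
  shows "span (root_face s) = UNIV"
proof (rule span_eq_UNIV_if_axes)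
  fix i
  have "(1 / (2 * s$i)) *\<^sub>R ((2 * s$i) *\<^sub>R axis i 1) \<in> span (root_face s)"
    using assms by (intro span_mul span_base long_root_in_root_face_sign_vector)
  moreover have "s$i \<noteq> 0"
    using sign_vector_mult_self[OF assms, of i] by auto
  ultimately show "axis i 1 \<in> span (root_face s)"
    by simp
qed

lemma root_face_facet_of:
  fixes s :: "real^'n"
  assumes "s \<in> sign_vectors"
  shows "root_face s facet_of convex hull rootsC"
proof -
  have span: "span (root_face s) = UNIV"
    using assms by (rule span_root_face_sign_vector)
  then have "dim (root_face s) = CARD('n)"
    by (rule dim_eq_CARD_if_span_UNIV)
  then have "aff_dim (root_face s) = aff_dim (convex hull (rootsC :: (real^'n) set)) - 1"
    using aff_dim_root_face[of s] aff_dim_root_polytope[where 'n='n] by simp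
  moreover have "root_face s \<noteq> {}"
    using span by auto
  moreover have "root_face s face_of convex hull rootsC"
    using assms by (intro root_face_face_of sign_vector_coordinate_abs_le_1)
  ultimately show ?thesis
    unfolding facet_of_def by blast
qed

lemma facet_of_root_polytope_subset_root_face:
  assumes "F facet_of convex hull (rootsC :: (real^'n) set)"
  obtains s where "s \<in> sign_vectors" and "F \<subseteq> root_face s"
proof -
  obtain W where W: "W \<subseteq> long_roots" "F = convex hull W"
    using assms face_of_root_polytope_hull_long_roots unfolding facet_of_def by blast
  have no_antipodes: "- v \<notin> W" if "v \<in> W" for v
  proof
    assume "- v \<in> W"
    then have "midpoint v (- v) \<in> F"
      using that unfolding W(2) by (intro midpoints_in_convex_hull hull_inc)
    then have "0 \<in> F"
      by (simp add: midpoint_def)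
    then have "F = convex hull rootsC"
      using assms face_of_root_polytope_eq_if_zero_in unfolding facet_of_def by blast
    then show False
      using assms by simp
  qed
  define s :: "real^'n" where "s = (\<chi> i. if - (2 *\<^sub>R axis i 1) \<in> W then -1 else 1)"
  have s: "s \<in> sign_vectors"
    unfolding sign_vectors_def s_def by simp
  have "W \<subseteq> root_face s"
  proof
    fix w
    assume w: "w \<in> W"
    then obtain a i where wa: "w = a *\<^sub>R axis i 1" "a \<in> {-2, 2}"
      using W(1) unfolding long_roots_def by blast
    have "a = 2 * s$i"
    proof (cases "a = 2")
      case True
      then have "- (2 *\<^sub>R axis i 1) \<notin> W"
        using no_antipodes[OF w] wa by simp
      then show ?thesis
        using True by (simp add: s_def)
    next
      case False
      then have "a = -2"
        using wa by simp
      then have "- (2 *\<^sub>R axis i 1) \<in> W"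
        using w wa by simp
      then show ?thesis
        using \<open>a = -2\<close> by (simp add: s_def)
    qed
    then show "w \<in> root_face s"
      using long_root_in_root_face_sign_vector[OF s, of i] wa(1) by simp
  qed
  then have "F \<subseteq> root_face s"
    unfolding W(2) by (rule hull_minimal) (rule convex_root_face)
  then show thesis
    using that s by blast
qed

lemma facet_of_root_polytope_iff:
  "F facet_of convex hull rootsC \<longleftrightarrow> (\<exists>s\<in>sign_vectors. F = root_face s)"
proof
  assume F: "F facet_of convex hull rootsC"
  then obtain s where s: "s \<in> sign_vectors" "F \<subseteq> root_face s"
    by (rule facet_of_root_polytope_subset_root_face)
  have "F face_of root_face s"
    using F s face_of_subset face_of_imp_subset root_face_facet_of
    unfolding facet_of_def by metis
  moreover have "aff_dim F = aff_dim (root_face s)"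
    using F root_face_facet_of[OF s(1)] unfolding facet_of_def by simp
  ultimately have "F = root_face s"
    using face_of_aff_dim_lt[OF convex_root_face] by fastforce
  then show "\<exists>s\<in>sign_vectors. F = root_face s"
    using s(1) by blast
qed (use root_face_facet_of in blast)


section \<open>The arrangement is the coordinate arrangement\<close>

lemma root_arrangement_rootsC:
  "root_arrangement (rootsC :: (real^'n) set)
    = {span F | F. F face_of convex hull rootsC \<and> aff_dim F = int CARD('n) - 2}"
proof -
  have "dim (span (rootsC :: (real^'n) set)) = CARD('n)"
    using dim_eq_CARD_if_span_UNIV[OF span_rootsC] by simp
  then show ?thesis
    unfolding root_arrangement_def root_polytope_def by simp
qed

lemma root_arrangement_subset_coordinate_hyperplane:
  assumes "H \<in> root_arrangement (rootsC :: (real^'n) set)"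
  obtains k where "H \<subseteq> {x. x$k = 0}"
proof -
  obtain F where F: "H = span F" "F face_of convex hull rootsC" "aff_dim F = int CARD('n) - 2"
    using assms unfolding root_arrangement_rootsC by blast
  obtain W where W: "W \<subseteq> long_roots" "F = convex hull W"
    using F(2) by (rule face_of_root_polytope_hull_long_roots)
  have "\<exists>k. W \<subseteq> {x. x$k = 0}"
  proof (rule ccontr)
    assume no_k: "\<nexists>k. W \<subseteq> {x. x$k = 0}"
    have "axis k 1 \<in> span W" for k
    proof -
      obtain w where w: "w \<in> W" "w$k \<noteq> 0"
        using no_k by blast
      then have "axis k 1 \<in> span {w}"
        using W(1) by (blast intro: axis_in_span_long_root)
      moreover have "span {w} \<subseteq> span W"
        using w(1) by (intro span_mono) simp
      ultimately show ?thesis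
        by blast
    qed
    then have "span W = UNIV"
      by (rule span_eq_UNIV_if_axes)
    then have "span F = UNIV"
      unfolding W(2) by (metis hull_subset span_mono top.extremum_uniqueI)
    then have "int (dim F) = int CARD('n)"
      by (simp add: dim_eq_CARD_if_span_UNIV)
    moreover have "int (dim F) \<le> aff_dim F + 1"
      using int_dim_eq_aff_dim[of F] by (auto split: if_splits)
    ultimately show False
      using F(3) by linarith
  qed
  then obtain k where "W \<subseteq> {x. x$k = 0}"
    by blast
  then have "F \<subseteq> {x. x$k = 0}"
    unfolding W(2) using convex_hull_subset_span span_minimal[OF _ subspace_coordinate_hyperplane]
    by blast
  then have "H \<subseteq> {x. x$k = 0}"
    unfolding F(1) by (rule span_minimal) (rule subspace_coordinate_hyperplane)
  then show thesis
    by (rule that)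
qed

lemma coordinate_hyperplane_in_root_arrangement:
  "{x :: real^'n. x$k = 0} \<in> root_arrangement rootsC"
proof -
  define c :: "real^'n" where "c = (\<chi> i. if i = k then 0 else 1)"
  have abs_c: "\<bar>c$i\<bar> \<le> 1" for i
    by (simp add: c_def)
  have span: "span (root_face c) = {x. x$k = 0}"
  proof
    show "span (root_face c) \<subseteq> {x. x$k = 0}"
      using abs_c by (intro span_minimal subspace_coordinate_hyperplane
          root_face_subset_coordinate_hyperplane) (simp_all add: c_def)
    show "{x. x$k = 0} \<subseteq> span (root_face c)"
    proof
      fix x :: "real^'n"
      assume x: "x \<in> {x. x$k = 0}"
      have "x$i *\<^sub>R axis i 1 \<in> span (root_face c)" for i
      proof (cases "i = k")
        case True
        then show ?thesis
          using x by (simp add: span_zero)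
      next
        case False
        then have "(x$i / 2) *\<^sub>R ((2 * c$i) *\<^sub>R axis i 1) \<in> span (root_face c)"
          by (intro span_mul span_base long_root_in_root_face) (simp add: c_def)
        then show ?thesis
          using False by (simp add: c_def)
      qed
      then have "(\<Sum>i\<in>UNIV. x$i *\<^sub>R axis i 1) \<in> span (root_face c)"
        by (intro span_sum)
      then show "x \<in> span (root_face c)"
        by (simp add: sum_coordinates_axis)
    qed
  qed
  have "dim (root_face c) = dim (span (root_face c))"
    by simp
  also have "\<dots> = CARD('n) - 1"
    by (simp only: span dim_coordinate_hyperplane)
  finally have "aff_dim (root_face c) = int CARD('n) - 2"
    using aff_dim_root_face[of c] by (simp add: of_nat_diff Suc_leI)
  moreover have "root_face c face_of convex hull rootsC"
    using abs_c by (rule root_face_face_of)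
  ultimately show ?thesis
    unfolding root_arrangement_rootsC span[symmetric] by blast
qed

lemma union_root_arrangement:
  "\<Union> (root_arrangement rootsC) = {x :: real^'n. \<exists>k. x$k = 0}"
proof (intro subset_antisym subsetI)
  fix x :: "real^'n"
  assume "x \<in> \<Union> (root_arrangement rootsC)"
  then obtain H where "x \<in> H" "H \<in> root_arrangement rootsC"
    by blast
  then show "x \<in> {x. \<exists>k. x$k = 0}"
    using root_arrangement_subset_coordinate_hyperplane by blast
next
  fix x :: "real^'n"
  assume "x \<in> {x. \<exists>k. x$k = 0}"
  then show "x \<in> \<Union> (root_arrangement rootsC)"
    using coordinate_hyperplane_in_root_arrangement by blast
qed


section \<open>Regions of the coordinate arrangement\<close>

lemma open_orthant_eq_Inter: "open_orthant s = (\<Inter>i. {x. (s$i *\<^sub>R axis i 1) \<bullet> x > 0})"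
  unfolding open_orthant_def by (auto simp: inner_axis')

lemma closed_orthant_eq_Inter: "closed_orthant s = (\<Inter>i. {x. (s$i *\<^sub>R axis i 1) \<bullet> x \<ge> 0})"
  unfolding closed_orthant_def by (auto simp: inner_axis')

lemma open_open_orthant: "open (open_orthant s)"
  unfolding open_orthant_eq_Inter by (intro open_INT ballI open_halfspace_gt) simp

lemma convex_open_orthant: "convex (open_orthant s)"
  unfolding open_orthant_eq_Inter by (intro convex_INT convex_halfspace_gt)

lemma sign_vector_in_open_orthant: "s \<in> sign_vectors \<Longrightarrow> s \<in> open_orthant s"
  unfolding open_orthant_def by (simp add: sign_vector_mult_self)

lemma open_orthants_disjoint:
  assumes "s \<in> sign_vectors" "t \<in> sign_vectors" "s \<noteq> t"
  shows "open_orthant s \<inter> open_orthant t = {}"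
proof -
  obtain i where "s$i \<noteq> t$i"
    using assms(3) vec_eq_iff by blast
  moreover have "\<bar>s$i\<bar> = 1" "\<bar>t$i\<bar> = 1"
    using assms(1,2) unfolding sign_vectors_def by blast+
  ultimately have t: "t$i = - s$i"
    by linarith
  have False if "x \<in> open_orthant s" "x \<in> open_orthant t" for x
  proof -
    have "0 < s$i * x$i" "0 < t$i * x$i"
      using that unfolding open_orthant_def by blast+
    then show False
      using t by simp
  qed
  then show ?thesis
    by blast
qed

lemma components_complement_coordinate_hyperplanes:
  "components (UNIV - {x :: real^'n. \<exists>k. x$k = 0}) = open_orthant ` sign_vectors"
proof (rule components_open_unique)
  show "pairwise disjnt (open_orthant ` sign_vectors)"
    unfolding pairwise_def disjnt_def using open_orthants_disjoint by blast
  show "\<Union> (open_orthant ` sign_vectors) = UNIV - {x :: real^'n. \<exists>k. x$k = 0}"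
  proof (intro subset_antisym subsetI)
    fix x :: "real^'n"
    assume "x \<in> \<Union> (open_orthant ` sign_vectors)"
    then obtain s where "x \<in> open_orthant s"
      by blast
    then have "0 < s$k * x$k" for k
      unfolding open_orthant_def by blast
    then have "x$k \<noteq> 0" for k
      by (metis less_irrefl mult_zero_right)
    then show "x \<in> UNIV - {x. \<exists>k. x$k = 0}"
      by blast
  next
    fix x :: "real^'n"
    assume "x \<in> UNIV - {x. \<exists>k. x$k = 0}"
    then have nonzero: "x$i \<noteq> 0" for i
      by blast
    have "0 < sgn (x$i) * x$i" "\<bar>sgn (x$i)\<bar> = 1" for i
      using nonzero[of i] by (auto simp: sgn_real_def)
    then have "x \<in> open_orthant (\<chi> i. sgn (x$i))" "(\<chi> i. sgn (x$i)) \<in> sign_vectors"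
      unfolding open_orthant_def sign_vectors_def by simp_all
    then show "x \<in> \<Union> (open_orthant ` sign_vectors)"
      by blast
  qed
  show "open X \<and> connected X \<and> X \<noteq> {}" if "X \<in> open_orthant ` sign_vectors" for X
    using that open_open_orthant convex_open_orthant convex_connected sign_vector_in_open_orthant
    by blast
qed

lemma closure_open_orthant:
  fixes s :: "real^'n"
  assumes "s \<in> sign_vectors"
  shows "closure (open_orthant s) = closed_orthant s"
proof
  have "closed (closed_orthant s)"
    unfolding closed_orthant_eq_Inter by (intro closed_INT ballI closed_halfspace_ge)
  moreover have "open_orthant s \<subseteq> closed_orthant s"
    unfolding open_orthant_def closed_orthant_def by (auto simp: less_imp_le)
  ultimately show "closure (open_orthant s) \<subseteq> closed_orthant s"
    by (intro closure_minimal)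
  show "closed_orthant s \<subseteq> closure (open_orthant s)"
  proof
    fix x
    assume x: "x \<in> closed_orthant s"
    define f where "f n = x + inverse (real (Suc n)) *\<^sub>R s" for n
    have "f n \<in> open_orthant s" for n
    proof -
      have "s$i * f n $ i = s$i * x$i + inverse (real (Suc n))" for i
        using sign_vector_mult_self[OF assms, of i] unfolding f_def by (simp add: algebra_simps)
      then show ?thesis
        using x unfolding closed_orthant_def open_orthant_def by (simp add: add_nonneg_pos)
    qed
    moreover have "f \<longlonglongrightarrow> x + 0 *\<^sub>R s"
      unfolding f_def by (intro tendsto_intros LIMSEQ_inverse_real_of_nat)
    ultimately show "x \<in> closure (open_orthant s)"
      unfolding closure_sequential by auto
  qed
qed

theorem theorem4p7:
  assumes "CARD('n) \<ge> 2"
  shows "closure ` arrangement_regions (span (rootsC :: (real ^ 'n) set))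
                     (root_arrangement (rootsC :: (real ^ 'n) set))
         = {cone_on F | F. F facet_of root_polytope (rootsC :: (real ^ 'n) set)}"
proof -
  have "closure ` arrangement_regions (span rootsC) (root_arrangement rootsC)
      = closure ` open_orthant ` (sign_vectors :: (real^'n) set)"
    unfolding arrangement_regions_def span_rootsC union_root_arrangement
      components_complement_coordinate_hyperplanes ..
  also have "\<dots> = closed_orthant ` sign_vectors"
    unfolding image_image by (rule image_cong[OF refl]) (rule closure_open_orthant)
  also have "\<dots> = cone_on ` root_face ` sign_vectors"
    unfolding image_image by (rule image_cong[OF refl]) (simp add: cone_on_root_face)
  also have "\<dots> = {cone_on F | F. F facet_of root_polytope (rootsC :: (real ^ 'n) set)}"
    unfolding root_polytope_def facet_of_root_polytope_iff by blast
  finally show ?thesis .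
qed

end
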